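(* Let $d\ge 2$, $2\le k\le d+1$, and let $y_1,\dots,y_N\in\{1,\dots,k\}$ be labels of a class-balanced dataset (each class has exactly $N/k\ge1$ samples). Let $s>0$, $\alpha_1\ge\frac12$, $\alpha_2\le\alpha_1$, $\beta_1,\beta_2\in\mathbb R$. For $\boldsymbol w_1,\dots,\boldsymbol w_k,\boldsymbol z_1,\dots,\boldsymbol z_N\in\mathbb S^{d-1}$ define the GM-Softmax empirical risk $$L=\frac1N\sum_{i=1}^N-\log\frac{\exp(s(\alpha_1\boldsymbol w_{y_i}^{\mathrm T}\boldsymbol z_i+\beta_1))}{\exp(s(\alpha_2\boldsymbol w_{y_i}^{\mathrm T}\boldsymbol z_i+\beta_2))+\sum_{j\ne y_i}\exp(s\boldsymbol w_j^{\mathrm T}\boldsymbol z_i)}.$$ Then for all such configurations $$L\ge \log\Big[\exp\big(s(\alpha_2-\alpha_1+\beta_2-\beta_1)\big)+(k-1)\exp\big(-s(\tfrac1{k-1}+\alpha_1+\beta_1)\big)\Big],$$ with equality if and only if $\boldsymbol w_i^{\mathrm T}\boldsymbol w_j=-\frac1{k-1}$ for all $i\ne j$ and $\boldsymbol z_i=\boldsymbol w_{y_i}$ for all $i$. Consequently every minimizer of $L$ has the largest possible class margin $m_c=\arccos\frac{-1}{k-1}$ and the largest possible minimal sample margin $\gamma_{\min}=\frac{k}{k-1}$.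
   Context: $\mathbb S^{d-1}$ is the unit sphere in $\mathbb R^d$. Class margin: $m_c(\{\boldsymbol w_i\})=\arccos\big[\max_{i\ne j}\boldsymbol w_i^{\mathrm T}\boldsymbol w_j\big]$ for unit prototypes. Minimal sample margin: $\gamma_{\min}=\min_i\big(\boldsymbol w_{y_i}^{\mathrm T}\boldsymbol z_i-\max_{j\ne y_i}\boldsymbol w_j^{\mathrm T}\boldsymbol z_i\big)$. *)

theory Defs
  imports "HOL-Analysis.Analysis"
begin

text \<open>Classes are 1..k, samples are indexed 0..N-1. Prototypes w :: nat => 'a,
  features z :: nat => 'a, labels y :: nat => nat.\<close>

definition unit_config :: "nat \<Rightarrow> nat \<Rightarrow> (nat \<Rightarrow> 'a::real_inner) \<Rightarrow> (nat \<Rightarrow> 'a) \<Rightarrow> bool" where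
  "unit_config k N w z \<longleftrightarrow> (\<forall>j\<in>{1..k}. norm (w j) = 1) \<and> (\<forall>i<N. norm (z i) = 1)"

definition gm_softmax_loss ::
  "real \<Rightarrow> real \<Rightarrow> real \<Rightarrow> real \<Rightarrow> real \<Rightarrow> nat \<Rightarrow> nat \<Rightarrow> (nat \<Rightarrow> nat)
   \<Rightarrow> (nat \<Rightarrow> 'a::real_inner) \<Rightarrow> (nat \<Rightarrow> 'a) \<Rightarrow> real" where
  "gm_softmax_loss s a1 a2 b1 b2 k N y w z =
     (1 / real N) * (\<Sum>i<N.
        - ln (exp (s * (a1 * (w (y i) \<bullet> z i) + b1)) /
              (exp (s * (a2 * (w (y i) \<bullet> z i) + b2)) +
               (\<Sum>j\<in>{1..k} - {y i}. exp (s * (w j \<bullet> z i))))))"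

definition class_margin :: "nat \<Rightarrow> (nat \<Rightarrow> 'a::real_inner) \<Rightarrow> real" where
  "class_margin k w = arccos (Max {w i \<bullet> w j | i j. i \<in> {1..k} \<and> j \<in> {1..k} \<and> i \<noteq> j})"

definition min_sample_margin ::
  "nat \<Rightarrow> nat \<Rightarrow> (nat \<Rightarrow> nat) \<Rightarrow> (nat \<Rightarrow> 'a::real_inner) \<Rightarrow> (nat \<Rightarrow> 'a) \<Rightarrow> real" where
  "min_sample_margin k N y w z =
     Min ((\<lambda>i. w (y i) \<bullet> z i - Max ((\<lambda>j. w j \<bullet> z i) ` ({1..k} - {y i}))) ` {..<N})"

end

theory Submission
  imports Defs
begin

(*
  Shifting all logits of sample i by its target logit, the i-th summand of the loss becomes
  ln (exp u_i + \<Sum>_{j \<noteq> y_i} exp x_ij). Jensen's inequality for exp replaces the inner sum by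
  (k - 1) exp of the mean of the x_ij, and the joint convexity of (u, v) \<mapsto> ln (exp u + (k - 1) exp v),
  which is increasing in both arguments, moves the average over the samples inside. Since
  w_{y_i} \<bullet> z_i \<le> 1 and a2 \<le> a1, the averaged target term is at least s (a2 - a1 + b2 - b1).
  For the averaged non-target term put W = \<Sum>_c w_c and t = 1 + (k - 1) a1; completing the square and
  class balance give
    \<Sum>_i (W - t w_{y_i}) \<bullet> z_i
      = - N t + \<Sum>_i |W - t w_{y_i} + t z_i|^2 / (2 t) + N |W|^2 (2 t - k) / (2 t k),
  and a1 \<ge> 1/2 gives 2 t > k, so both error terms are nonnegative. Equality forces W = 0, z_i = w_{y_i}
  and equal non-target logits in every sample, i.e. a regular simplex; one exists as soon as
  k \<le> d + 1, so the minimisers are exactly these configurations. The margin bounds hold for every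
  configuration because \<Sum>_{i \<noteq> j} w_i \<bullet> w_j = |W|^2 - k \<ge> -k and some class p has |k w_p - W| \<le> k.
*)

definition balanced_labels :: "nat \<Rightarrow> nat \<Rightarrow> (nat \<Rightarrow> nat) \<Rightarrow> bool" where
  "balanced_labels k N y \<longleftrightarrow>
     (\<forall>i<N. y i \<in> {1..k}) \<and> (\<forall>c\<in>{1..k}. card {i. i < N \<and> y i = c} = N div k)"

lemma sum_balanced_labels:
  fixes f :: "nat \<Rightarrow> 'b::semiring_1"
  assumes "balanced_labels k N y"
  shows "(\<Sum>i<N. f (y i)) = of_nat (N div k) * (\<Sum>c\<in>{1..k}. f c)"
proof -
  have "(\<Sum>i<N. f (y i)) = (\<Sum>c\<in>{1..k}. \<Sum>i\<in>{i\<in>{..<N}. y i = c}. f (y i))"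
    using assms by (intro sum.group[symmetric]) (auto simp: balanced_labels_def)
  also have "\<dots> = (\<Sum>c\<in>{1..k}. of_nat (N div k) * f c)"
    using assms by (intro sum.cong) (auto simp: balanced_labels_def)
  finally show ?thesis
    by (simp add: sum_distrib_left)
qed

lemma balanced_labels_obtain_sample:
  assumes "balanced_labels k N y" "N div k \<ge> 1" "c \<in> {1..k}"
  obtains i where "i < N" "y i = c"
proof -
  have "card {i. i < N \<and> y i = c} \<noteq> 0"
    using assms by (auto simp: balanced_labels_def)
  then show thesis
    using that by (metis (mono_tags, lifting) card.empty ex_in_conv mem_Collect_eq)
qed

lemma classes_Diff_singleton_nonempty:
  assumes "2 \<le> k"
  shows "{1..k} - {p::nat} \<noteq> {}"
proof -
  have "(if p = 1 then 2 else 1) \<in> {1..k} - {p}"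
    using assms by auto
  then show ?thesis
    by blast
qed

lemma sum_exp_ge_card_mul_exp_mean:
  fixes x :: "'b \<Rightarrow> real"
  assumes J: "finite J" "J \<noteq> {}"
  defines "\<mu> \<equiv> (\<Sum>j\<in>J. x j) / card J"
  shows "card J * exp \<mu> \<le> (\<Sum>j\<in>J. exp (x j))"
    and "card J * exp \<mu> = (\<Sum>j\<in>J. exp (x j)) \<Longrightarrow> \<forall>j\<in>J. x j = \<mu>"
proof -
  have tangent_less: "exp \<mu> * (1 + (x j - \<mu>)) < exp (x j)" if "x j \<noteq> \<mu>" for j
  proof -
    have "1 - (\<mu> - x j) < exp (- (\<mu> - x j))"
      using that exp_minus_greater[of "\<mu> - x j"] by simp
    then show ?thesis
      by (simp add: exp_diff field_simps)
  qed
  have tangent_le: "exp \<mu> * (1 + (x j - \<mu>)) \<le> exp (x j)" for j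
    using tangent_less[of j] by (cases "x j = \<mu>") auto
  have "(\<Sum>j\<in>J. 1 + (x j - \<mu>)) = card J"
    using J by (simp add: \<mu>_def sum.distrib sum_subtractf)
  then have tangent_sum: "(\<Sum>j\<in>J. exp \<mu> * (1 + (x j - \<mu>))) = card J * exp \<mu>"
    by (simp flip: sum_distrib_left)
  show "card J * exp \<mu> \<le> (\<Sum>j\<in>J. exp (x j))"
    unfolding tangent_sum[symmetric] by (intro sum_mono tangent_le)
  show "\<forall>j\<in>J. x j = \<mu>" if "card J * exp \<mu> = (\<Sum>j\<in>J. exp (x j))"
  proof (rule ccontr)
    assume "\<not> (\<forall>j\<in>J. x j = \<mu>)"
    then have "(\<Sum>j\<in>J. exp \<mu> * (1 + (x j - \<mu>))) < (\<Sum>j\<in>J. exp (x j))"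
      using J tangent_le tangent_less by (intro sum_strict_mono_ex1) auto
    with that show False
      unfolding tangent_sum by simp
  qed
qed

definition log_sum_exp :: "real \<Rightarrow> real \<Rightarrow> real \<Rightarrow> real" where
  "log_sum_exp m u v = ln (exp u + m * exp v)"

lemma log_sum_exp_mono:
  assumes "m > 0" "u' \<le> u" "v' \<le> v"
  shows "log_sum_exp m u' v' \<le> log_sum_exp m u v"
  unfolding log_sum_exp_def using assms
  by (subst ln_le_cancel_iff) (auto intro: add_pos_pos add_mono)

lemma log_sum_exp_strict_mono:
  assumes "m > 0" "v' < v"
  shows "log_sum_exp m u v' < log_sum_exp m u v"
  unfolding log_sum_exp_def using assms
  by (subst ln_less_cancel_iff) (auto intro: add_pos_pos)

lemma log_sum_exp_supporting_plane:
  fixes a b u v :: real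
  assumes m: "m > 0"
  defines "p \<equiv> exp a / (exp a + m * exp b)"
  shows "log_sum_exp m a b + p * (u - a) + (1 - p) * (v - b) \<le> log_sum_exp m u v"
proof -
  define D where "D = exp a + m * exp b"
  have D: "D > 0" and uv: "exp u + m * exp v > 0"
    using m by (auto simp: D_def intro: add_pos_pos)
  have p: "0 \<le> p" "p \<le> 1" "p = exp a / D" "1 - p = m * exp b / D"
    using D m by (auto simp: p_def D_def field_simps)
  have "exp (p * (u - a) + (1 - p) * (v - b)) \<le> p * exp (u - a) + (1 - p) * exp (v - b)"
    using convex_onD[OF exp_convex, of "1 - p" "u - a" "v - b"] p(1,2) by simp
  also have "\<dots> = (exp u + m * exp v) / D"
    unfolding p(4) using D by (simp add: p(3) exp_diff add_divide_distrib)
  finally have "p * (u - a) + (1 - p) * (v - b) \<le> ln ((exp u + m * exp v) / D)"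
    using D uv by (subst ln_ge_iff) auto
  also have "\<dots> = log_sum_exp m u v - log_sum_exp m a b"
    using D uv by (simp add: log_sum_exp_def D_def ln_div)
  finally show ?thesis
    by simp
qed

lemma log_sum_exp_mean_le:
  fixes u v :: "'b \<Rightarrow> real"
  assumes "m > 0" "finite I" "I \<noteq> {}"
  shows "log_sum_exp m ((\<Sum>i\<in>I. u i) / card I) ((\<Sum>i\<in>I. v i) / card I)
           \<le> (\<Sum>i\<in>I. log_sum_exp m (u i) (v i)) / card I"
proof -
  define a where "a = (\<Sum>i\<in>I. u i) / card I"
  define b where "b = (\<Sum>i\<in>I. v i) / card I"
  define p where "p = exp a / (exp a + m * exp b)"
  have I: "real (card I) > 0"
    using assms by auto
  have "(\<Sum>i\<in>I. log_sum_exp m a b + p * (u i - a) + (1 - p) * (v i - b))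
          \<le> (\<Sum>i\<in>I. log_sum_exp m (u i) (v i))"
    unfolding p_def using assms by (intro sum_mono log_sum_exp_supporting_plane) auto
  moreover have "(\<Sum>i\<in>I. u i - a) = 0" "(\<Sum>i\<in>I. v i - b) = 0"
    using I by (simp_all add: a_def b_def sum_subtractf)
  then have "(\<Sum>i\<in>I. log_sum_exp m a b + p * (u i - a) + (1 - p) * (v i - b))
          = card I * log_sum_exp m a b"
    by (simp add: sum.distrib flip: sum_distrib_left)
  ultimately show ?thesis
    using I by (simp add: a_def b_def field_simps)
qed

lemma neg_ln_softmax_eq:
  fixes x :: "'b \<Rightarrow> real"
  shows "- ln (exp a / (exp b + (\<Sum>j\<in>J. exp (x j)))) = ln (exp (b - a) + (\<Sum>j\<in>J. exp (x j - a)))"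
proof -
  have "exp b + (\<Sum>j\<in>J. exp (x j)) > 0"
    by (intro add_pos_nonneg sum_nonneg) auto
  then have "- ln (exp a / (exp b + (\<Sum>j\<in>J. exp (x j)))) = ln ((exp b + (\<Sum>j\<in>J. exp (x j))) / exp a)"
    by (simp add: ln_div)
  also have "(exp b + (\<Sum>j\<in>J. exp (x j))) / exp a = exp (b - a) + (\<Sum>j\<in>J. exp (x j - a))"
    by (simp add: exp_diff add_divide_distrib sum_divide_distrib)
  finally show ?thesis .
qed

lemma sum_inner_balanced_eq:
  fixes w z :: "nat \<Rightarrow> 'a::real_inner" and t :: real
  assumes bal: "balanced_labels k N y" and "k dvd N" "k > 0" "t \<noteq> 0"
    and w: "\<forall>c\<in>{1..k}. norm (w c) = 1" and z: "\<forall>i<N. norm (z i) = 1"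
  defines "W \<equiv> \<Sum>c\<in>{1..k}. w c"
  shows "(\<Sum>i<N. (W - t *\<^sub>R w (y i)) \<bullet> z i)
           = - real N * t + (\<Sum>i<N. (norm (W - t *\<^sub>R w (y i) + t *\<^sub>R z i))\<^sup>2) / (2 * t)
             + N * (norm W)\<^sup>2 * (2 * t - k) / (2 * t * k)"
proof -
  have labels: "y i \<in> {1..k}" if "i < N" for i
    using bal that by (simp add: balanced_labels_def)
  have square: "(W - t *\<^sub>R w (y i)) \<bullet> z i
      = (norm (W - t *\<^sub>R w (y i) + t *\<^sub>R z i))\<^sup>2 / (2 * t) - (norm W)\<^sup>2 / (2 * t)
        + W \<bullet> w (y i) - t" if i: "i < N" for i
  proof -
    have "w (y i) \<bullet> w (y i) = 1" "z i \<bullet> z i = 1"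
      using w z labels i by (simp_all add: dot_square_norm)
    then show ?thesis
      using \<open>t \<noteq> 0\<close> unfolding power2_norm_eq_inner
      by (simp add: inner_add_left inner_add_right inner_diff_left inner_diff_right
          inner_commute field_simps power2_eq_square)
  qed
  have "(\<Sum>i<N. W \<bullet> w (y i)) = real (N div k) * (\<Sum>c\<in>{1..k}. W \<bullet> w c)"
    using bal by (rule sum_balanced_labels)
  also have "\<dots> = N / k * (norm W)\<^sup>2"
    using assms(2) by (simp add: W_def real_of_nat_div inner_sum_right power2_norm_eq_inner)
  finally have "(\<Sum>i<N. W \<bullet> w (y i)) = N / k * (norm W)\<^sup>2" .
  moreover have "(\<Sum>i<N. (W - t *\<^sub>R w (y i)) \<bullet> z i)
      = (\<Sum>i<N. (norm (W - t *\<^sub>R w (y i) + t *\<^sub>R z i))\<^sup>2) / (2 * t) - N * (norm W)\<^sup>2 / (2 * t)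
        + (\<Sum>i<N. W \<bullet> w (y i)) - real N * t"
    by (simp add: square sum.distrib sum_subtractf sum_divide_distrib)
  ultimately show ?thesis
    using \<open>k > 0\<close> \<open>t \<noteq> 0\<close> by (simp only:) (simp add: field_simps)
qed

lemma sum_inner_balanced_ge:
  fixes w z :: "nat \<Rightarrow> 'a::real_inner" and t :: real
  assumes bal: "balanced_labels k N y" and "k dvd N" "k > 0" "N > 0" "2 * t > k"
    and w: "\<forall>c\<in>{1..k}. norm (w c) = 1" and z: "\<forall>i<N. norm (z i) = 1"
  defines "W \<equiv> \<Sum>c\<in>{1..k}. w c"
  shows "- real N * t \<le> (\<Sum>i<N. (W - t *\<^sub>R w (y i)) \<bullet> z i)"
    and "(\<Sum>i<N. (W - t *\<^sub>R w (y i)) \<bullet> z i) = - real N * t \<Longrightarrow>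
           W = 0 \<and> (\<forall>i<N. z i = w (y i))"
proof -
  define R1 where "R1 = (\<Sum>i<N. (norm (W - t *\<^sub>R w (y i) + t *\<^sub>R z i))\<^sup>2) / (2 * t)"
  define R2 where "R2 = N * (norm W)\<^sup>2 * (2 * t - k) / (2 * t * k)"
  have t: "t > 0"
    using assms(3,5) by linarith
  have eq: "(\<Sum>i<N. (W - t *\<^sub>R w (y i)) \<bullet> z i) = - real N * t + R1 + R2"
    using sum_inner_balanced_eq[OF bal assms(2,3) _ w z, of t] t
    unfolding R1_def R2_def W_def by simp
  have R1: "R1 \<ge> 0" and R2: "R2 \<ge> 0"
    unfolding R1_def R2_def using t assms(3,5) by (auto intro!: sum_nonneg divide_nonneg_pos)
  then show "- real N * t \<le> (\<Sum>i<N. (W - t *\<^sub>R w (y i)) \<bullet> z i)"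
    unfolding eq by simp
  assume "(\<Sum>i<N. (W - t *\<^sub>R w (y i)) \<bullet> z i) = - real N * t"
  then have "R1 = 0" "R2 = 0"
    using R1 R2 unfolding eq by linarith+
  have W: "W = 0"
    using \<open>R2 = 0\<close> t assms(3-5) by (simp add: R2_def)
  have "\<forall>i\<in>{..<N}. (norm (W - t *\<^sub>R w (y i) + t *\<^sub>R z i))\<^sup>2 = 0"
    using \<open>R1 = 0\<close> t by (simp add: R1_def sum_nonneg_eq_0_iff)
  then have "\<forall>i<N. z i = w (y i)"
    using t by (auto simp: W algebra_simps)
  with W show "W = 0 \<and> (\<forall>i<N. z i = w (y i))"
    by simp
qed

lemma sum_offdiagonal_inner:
  fixes w :: "'b \<Rightarrow> 'a::real_inner"
  assumes "finite K" "\<forall>i\<in>K. norm (w i) = 1"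
  shows "(\<Sum>i\<in>K. \<Sum>j\<in>K - {i}. w i \<bullet> w j) = (norm (\<Sum>i\<in>K. w i))\<^sup>2 - card K"
proof -
  have "(\<Sum>j\<in>K - {i}. w i \<bullet> w j) = w i \<bullet> (\<Sum>j\<in>K. w j) - 1" if "i \<in> K" for i
    using assms that by (simp add: sum_diff1 inner_sum_right dot_square_norm)
  then show ?thesis
    by (simp add: sum_subtractf power2_norm_eq_inner inner_sum_left)
qed

lemma ex_norm_card_scaleR_minus_sum_le:
  fixes w :: "'b \<Rightarrow> 'a::real_inner"
  assumes K: "finite K" "K \<noteq> {}" and w: "\<forall>i\<in>K. norm (w i) = 1"
  shows "\<exists>p\<in>K. norm (card K *\<^sub>R w p - (\<Sum>i\<in>K. w i)) \<le> card K"
proof (rule ccontr)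
  define n where "n = real (card K)"
  define W where "W = (\<Sum>i\<in>K. w i)"
  assume "\<not> ?thesis"
  then have "\<forall>p\<in>K. n\<^sup>2 < (norm (n *\<^sub>R w p - W))\<^sup>2"
    unfolding n_def W_def by (auto intro!: power_strict_mono)
  then have "(\<Sum>p\<in>K. n\<^sup>2) < (\<Sum>p\<in>K. (norm (n *\<^sub>R w p - W))\<^sup>2)"
    using K by (intro sum_strict_mono) auto
  \<comment> \<open>The squared distances of the scaled vertices from \<open>W\<close> sum to \<open>n\<^sup>3 - n |W|\<^sup>2\<close>.\<close>
  also have "\<dots> = (\<Sum>p\<in>K. n\<^sup>2 - 2 * n * (w p \<bullet> W) + W \<bullet> W)"
    using w unfolding power2_norm_eq_inner
    by (intro sum.cong) (auto simp: inner_diff_left inner_diff_right inner_commute norm_eq_1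
        power2_eq_square algebra_simps)
  also have "\<dots> = (\<Sum>p\<in>K. n\<^sup>2) - n * (W \<bullet> W)"
    by (simp add: sum.distrib sum_subtractf n_def W_def inner_sum_left algebra_simps
        flip: sum_distrib_left)
  finally show False
    using mult_nonneg_nonneg[OF of_nat_0_le_iff inner_ge_zero, of "card K" W] by (simp add: n_def)
qed

definition regular_simplex :: "nat \<Rightarrow> (nat \<Rightarrow> 'a::real_inner) \<Rightarrow> bool" where
  "regular_simplex k w \<longleftrightarrow> (\<forall>i\<in>{1..k}. norm (w i) = 1) \<and>
     (\<forall>i\<in>{1..k}. \<forall>j\<in>{1..k}. i \<noteq> j \<longrightarrow> w i \<bullet> w j = - 1 / (real k - 1))"

lemma regular_simplex_coefficients:
  fixes m r a b :: real
  assumes m: "m > 0"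
    and r: "r = 1 / sqrt m" and a: "a = sqrt ((m + 1) / m)" and b: "b = (r - a) / m"
  shows "r\<^sup>2 * m = 1" and "r * (a + b * m) = 1 / m"
    and "2 * a * b + b\<^sup>2 * m = - 1 / m" and "a\<^sup>2 + (2 * a * b + b\<^sup>2 * m) = 1"
proof -
  have r2: "r\<^sup>2 = 1 / m" and a2: "a\<^sup>2 = (m + 1) / m"
    using m by (simp_all add: r a power_divide)
  then show "r\<^sup>2 * m = 1"
    using m by simp
  show "r * (a + b * m) = 1 / m"
    using m r2 by (simp add: b power2_eq_square)
  have "2 * a * b + b\<^sup>2 * m = (r\<^sup>2 - a\<^sup>2) / m"
    using m by (simp add: b power2_eq_square field_simps)
  then show cross: "2 * a * b + b\<^sup>2 * m = - 1 / m"
    using r2 a2 m by (simp add: field_simps)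
  show "a\<^sup>2 + (2 * a * b + b\<^sup>2 * m) = 1"
    unfolding a2 cross using m by (simp add: field_simps)
qed

lemma regular_simplex_from_orthonormal:
  fixes e :: "nat \<Rightarrow> 'a::real_inner"
  assumes n: "n \<ge> 1" and e: "\<forall>i\<in>{1..n}. \<forall>j\<in>{1..n}. e i \<bullet> e j = (if i = j then 1 else 0)"
  shows "\<exists>w :: nat \<Rightarrow> 'a. regular_simplex (Suc n) w"
proof -
  define m where "m = real n"
  define B where "B = (\<Sum>i\<in>{1..n}. e i)"
  define r where "r = 1 / sqrt m"
  define a where "a = sqrt ((m + 1) / m)"
  define b where "b = (r - a) / m"
  \<comment> \<open>The last vertex points along \<open>-B\<close>; the others are tilted from \<open>e i\<close> towards \<open>B\<close>.\<close>
  define w where "w i = (if i = Suc n then - r *\<^sub>R B else a *\<^sub>R e i + b *\<^sub>R B)" for i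
  have m: "m > 0"
    using n by (simp add: m_def)
  note coeffs = regular_simplex_coefficients[OF m r_def a_def b_def]
  have Be: "B \<bullet> e j = 1" if "j \<in> {1..n}" for j
  proof -
    have "B \<bullet> e j = (\<Sum>i\<in>{1..n}. if i = j then 1 else 0)"
      unfolding B_def inner_sum_left using e that by (intro sum.cong) auto
    then show ?thesis
      using that by simp
  qed
  have BB: "B \<bullet> B = m"
    using Be by (simp add: B_def m_def inner_sum_right)
  have last_last: "w (Suc n) \<bullet> w (Suc n) = 1"
    using BB coeffs(1) by (simp add: w_def power2_eq_square)
  have last_other: "w i \<bullet> w (Suc n) = - 1 / m" if "i \<in> {1..n}" for i
  proof -
    have "w i \<bullet> w (Suc n) = - (r * (a + b * m))"
      using that Be[OF that] BB
      by (simp add: w_def inner_add_left inner_commute algebra_simps)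
    then show ?thesis
      using coeffs(2) by simp
  qed
  have other_other: "w i \<bullet> w j = a\<^sup>2 * (e i \<bullet> e j) + (2 * a * b + b\<^sup>2 * m)"
    if "i \<in> {1..n}" "j \<in> {1..n}" for i j
    using that Be BB
    by (simp add: w_def inner_add_left inner_add_right inner_commute power2_eq_square algebra_simps)
  have "w i \<bullet> w i = 1" if "i \<in> {1..Suc n}" for i
    using that last_last other_other[of i i] e coeffs(4) by (cases "i = Suc n") auto
  moreover have "w i \<bullet> w j = - 1 / m" if "i \<in> {1..Suc n}" "j \<in> {1..Suc n}" "i \<noteq> j" for i j
    using that last_other other_other[of i j] e coeffs(3) inner_commute[of "w i" "w j"]
    by (cases "i = Suc n"; cases "j = Suc n") auto
  ultimately have "regular_simplex (Suc n) w"
    by (simp add: regular_simplex_def norm_eq_1 m_def)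
  then show ?thesis
    by blast
qed

lemma regular_simplex_exists:
  assumes "2 \<le> k" "k \<le> DIM('a::euclidean_space) + 1"
  shows "\<exists>w :: nat \<Rightarrow> 'a. regular_simplex k w"
proof -
  have "k - 1 \<le> card (Basis :: 'a set)"
    using assms by simp
  then obtain T where T: "T \<subseteq> (Basis :: 'a set)" "card T = k - 1" "finite T"
    by (rule obtain_subset_with_card_n)
  then obtain e where e: "bij_betw e {1..k - 1} T"
    using ex_bij_betw_nat_finite_1 by metis
  have eB: "e i \<in> Basis" if "i \<in> {1..k - 1}" for i
    using e T(1) that by (auto simp: bij_betw_def)
  have "e i \<bullet> e j = (if i = j then 1 else 0)" if "i \<in> {1..k - 1}" "j \<in> {1..k - 1}" for i j
    using inner_Basis[OF eB eB, OF that] e that by (auto simp: bij_betw_def inj_on_eq_iff)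
  then have "\<exists>w :: nat \<Rightarrow> 'a. regular_simplex (Suc (k - 1)) w"
    using assms by (intro regular_simplex_from_orthonormal[of "k - 1" e]) auto
  then show ?thesis
    using assms by simp
qed

lemma ex_pairwise_inner_ge:
  fixes w :: "nat \<Rightarrow> 'a::real_inner"
  assumes k: "2 \<le> k" and w: "\<forall>i\<in>{1..k}. norm (w i) = 1"
  shows "\<exists>i\<in>{1..k}. \<exists>j\<in>{1..k}. i \<noteq> j \<and> - 1 / (real k - 1) \<le> w i \<bullet> w j"
proof (rule ccontr)
  assume "\<not> ?thesis"
  then have "\<forall>i\<in>{1..k}. \<forall>j\<in>{1..k} - {i}. w i \<bullet> w j < - 1 / (real k - 1)"
    by (auto simp: not_le)
  then have "(\<Sum>i\<in>{1..k}. \<Sum>j\<in>{1..k} - {i}. w i \<bullet> w j)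
      < (\<Sum>i\<in>{1..k}. \<Sum>j\<in>{1..k} - {i}. - 1 / (real k - 1))"
    using k by (intro sum_strict_mono classes_Diff_singleton_nonempty) auto
  also have "\<dots> = - real k"
    using k by (simp add: of_nat_diff)
  finally show False
    using sum_offdiagonal_inner[of "{1..k}" w] w by simp
qed

lemma finite_pairwise_inner:
  fixes w :: "nat \<Rightarrow> 'a::real_inner"
  shows "finite {w i \<bullet> w j | i j. i \<in> {1..k} \<and> j \<in> {1..k} \<and> i \<noteq> j}"
proof (rule finite_subset)
  show "finite {w i \<bullet> w j | i j. i \<in> {1..k} \<and> j \<in> {1..k}}"
    by (rule finite_image_set2; unfold Collect_mem_eq; simp)
qed blast

lemma pairwise_inner_nonempty:
  fixes w :: "nat \<Rightarrow> 'a::real_inner"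
  assumes "2 \<le> k"
  shows "w 1 \<bullet> w 2 \<in> {w i \<bullet> w j | i j. i \<in> {1..k} \<and> j \<in> {1..k} \<and> i \<noteq> j}"
proof -
  have "(1::nat) \<in> {1..k}" "(2::nat) \<in> {1..k}" "(1::nat) \<noteq> 2"
    using assms by auto
  then show ?thesis
    by blast
qed

lemma class_margin_le:
  fixes w :: "nat \<Rightarrow> 'a::real_inner"
  assumes k: "2 \<le> k" and w: "\<forall>i\<in>{1..k}. norm (w i) = 1"
  shows "class_margin k w \<le> arccos (- 1 / (real k - 1))"
proof -
  define S where "S = {w i \<bullet> w j | i j. i \<in> {1..k} \<and> j \<in> {1..k} \<and> i \<noteq> j}"
  have S: "finite S" "S \<noteq> {}"
    using finite_pairwise_inner pairwise_inner_nonempty[OF k] unfolding S_def by blast+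
  obtain i j where "i \<in> {1..k}" "j \<in> {1..k}" "i \<noteq> j" "- 1 / (real k - 1) \<le> w i \<bullet> w j"
    using ex_pairwise_inner_ge[OF k w] by blast
  moreover from this have "w i \<bullet> w j \<le> Max S"
    using S(1) unfolding S_def by (intro Max_ge) blast+
  ultimately have "- 1 / (real k - 1) \<le> Max S"
    by linarith
  moreover have "w i \<bullet> w j \<le> 1" if "i \<in> {1..k}" "j \<in> {1..k}" for i j
    using norm_cauchy_schwarz[of "w i" "w j"] w that by simp
  then have "Max S \<le> 1"
    using S by (auto simp: S_def Max_le_iff)
  moreover have "- 1 \<le> - 1 / (real k - 1)"
    using k by (simp add: field_simps)
  ultimately show ?thesis
    unfolding class_margin_def S_def[symmetric] by (intro arccos_le_arccos)
qed

lemma class_margin_regular_simplex: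
  assumes "regular_simplex k w" "2 \<le> k"
  shows "class_margin k w = arccos (- 1 / (real k - 1))"
proof -
  define S where "S = {w i \<bullet> w j | i j. i \<in> {1..k} \<and> j \<in> {1..k} \<and> i \<noteq> j}"
  have "S \<subseteq> {- 1 / (real k - 1)}"
    using assms(1) by (auto simp: S_def regular_simplex_def)
  moreover have "w 1 \<bullet> w 2 \<in> S"
    unfolding S_def using assms(2) by (rule pairwise_inner_nonempty)
  ultimately have "S = {- 1 / (real k - 1)}"
    by (auto simp: subset_singleton_iff)
  then show ?thesis
    unfolding class_margin_def S_def[symmetric] by simp
qed

lemma sample_margin_le:
  fixes w :: "nat \<Rightarrow> 'a::real_inner"
  assumes k: "2 \<le> k" and p: "p \<in> {1..k}"
  shows "w p \<bullet> x - Max ((\<lambda>j. w j \<bullet> x) ` ({1..k} - {p}))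
           \<le> (real k *\<^sub>R w p - (\<Sum>c\<in>{1..k}. w c)) \<bullet> x / (real k - 1)"
proof -
  define M where "M = Max ((\<lambda>j. w j \<bullet> x) ` ({1..k} - {p}))"
  have "(\<Sum>j\<in>{1..k} - {p}. w j \<bullet> x) \<le> real (card ({1..k} - {p})) * M"
    unfolding M_def by (intro sum_bounded_above Max_ge) auto
  also have "\<dots> = (real k - 1) * M"
    using p by (simp add: of_nat_diff)
  finally have "(\<Sum>c\<in>{1..k}. w c) \<bullet> x - w p \<bullet> x \<le> (real k - 1) * M"
    using p by (simp add: sum_diff1 inner_sum_left)
  then show ?thesis
    using k by (simp add: M_def inner_diff_left field_simps)
qed

lemma min_sample_margin_le:
  fixes w z :: "nat \<Rightarrow> 'a::real_inner"
  assumes bal: "balanced_labels k N y" and "N div k \<ge> 1" and k: "2 \<le> k"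
    and unit: "unit_config k N w z"
  shows "min_sample_margin k N y w z \<le> real k / (real k - 1)"
proof -
  define W where "W = (\<Sum>c\<in>{1..k}. w c)"
  have w: "\<forall>c\<in>{1..k}. norm (w c) = 1" and z: "\<forall>i<N. norm (z i) = 1"
    using unit by (simp_all add: unit_config_def)
  obtain p where p: "p \<in> {1..k}" "norm (real k *\<^sub>R w p - W) \<le> real k"
    using ex_norm_card_scaleR_minus_sum_le[of "{1..k}" w] k w by (auto simp: W_def)
  obtain i where i: "i < N" "y i = p"
    using balanced_labels_obtain_sample[OF bal assms(2) p(1)] .
  have "(real k *\<^sub>R w p - W) \<bullet> z i \<le> real k"
    using norm_cauchy_schwarz[of "real k *\<^sub>R w p - W" "z i"] z i p(2) by simp
  then have "(real k *\<^sub>R w p - W) \<bullet> z i / (real k - 1) \<le> real k / (real k - 1)"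
    using k by (intro divide_right_mono) auto
  then have "w p \<bullet> z i - Max ((\<lambda>j. w j \<bullet> z i) ` ({1..k} - {p})) \<le> real k / (real k - 1)"
    using sample_margin_le[OF k p(1), of w "z i"] unfolding W_def by linarith
  moreover have "min_sample_margin k N y w z
      \<le> w p \<bullet> z i - Max ((\<lambda>j. w j \<bullet> z i) ` ({1..k} - {p}))"
    unfolding min_sample_margin_def using i by (intro Min_le) auto
  ultimately show ?thesis
    by linarith
qed

lemma min_sample_margin_regular_simplex:
  assumes simplex: "regular_simplex k w" and k: "2 \<le> k" and "N > 0"
    and labels: "\<forall>i<N. y i \<in> {1..k}" and zw: "\<forall>i<N. z i = w (y i)"
  shows "min_sample_margin k N y w z = real k / (real k - 1)"
proof -
  have "w (y i) \<bullet> z i - Max ((\<lambda>j. w j \<bullet> z i) ` ({1..k} - {y i})) = real k / (real k - 1)"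
    if i: "i < N" for i
  proof -
    have "(\<lambda>j. w j \<bullet> z i) ` ({1..k} - {y i}) = (\<lambda>j. - 1 / (real k - 1)) ` ({1..k} - {y i})"
      using simplex labels zw i by (intro image_cong) (auto simp: regular_simplex_def)
    then have "(\<lambda>j. w j \<bullet> z i) ` ({1..k} - {y i}) = {- 1 / (real k - 1)}"
      using classes_Diff_singleton_nonempty[OF k, of "y i"] by (simp add: image_constant_conv)
    moreover have "w (y i) \<bullet> z i = 1"
      using simplex labels zw i by (simp add: regular_simplex_def norm_eq_1)
    ultimately show ?thesis
      using k by (simp add: field_simps)
  qed
  then have "(\<lambda>i. w (y i) \<bullet> z i - Max ((\<lambda>j. w j \<bullet> z i) ` ({1..k} - {y i}))) ` {..<N}
      = (\<lambda>i. real k / (real k - 1)) ` {..<N}"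
    by (intro image_cong) auto
  then have "(\<lambda>i. w (y i) \<bullet> z i - Max ((\<lambda>j. w j \<bullet> z i) ` ({1..k} - {y i}))) ` {..<N}
      = {real k / (real k - 1)}"
    using \<open>N > 0\<close> by (simp add: image_constant_conv lessThan_empty_iff)
  then show ?thesis
    by (simp add: min_sample_margin_def)
qed

lemma gm_softmax_summand_ge:
  fixes w :: "nat \<Rightarrow> 'a::real_inner" and x :: 'a and s a1 a2 b1 b2 :: real
  assumes k: "2 \<le> k" and p: "p \<in> {1..k}"
  defines "m \<equiv> real k - 1" and "W \<equiv> \<Sum>c\<in>{1..k}. w c"
  defines "r \<equiv> - ln (exp (s * (a1 * (w p \<bullet> x) + b1)) /
      (exp (s * (a2 * (w p \<bullet> x) + b2)) + (\<Sum>j\<in>{1..k} - {p}. exp (s * (w j \<bullet> x)))))"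
    and "u \<equiv> s * ((a2 - a1) * (w p \<bullet> x) + b2 - b1)"
    and "v \<equiv> s * ((W - (1 + m * a1) *\<^sub>R w p) \<bullet> x / m - b1)"
  shows "log_sum_exp m u v \<le> r"
    and "s \<noteq> 0 \<Longrightarrow> r = log_sum_exp m u v \<Longrightarrow>
           \<forall>j\<in>{1..k} - {p}. w j \<bullet> x = (W \<bullet> x - w p \<bullet> x) / m"
proof -
  define J where "J = {1..k} - {p}"
  define a where "a = s * (a1 * (w p \<bullet> x) + b1)"
  define y where "y j = s * (w j \<bullet> x) - a" for j
  have J: "finite J" "J \<noteq> {}" "real (card J) = m"
    using classes_Diff_singleton_nonempty[OF k] p k by (auto simp: J_def m_def of_nat_diff)
  have m: "m > 0"
    using k by (simp add: m_def)
  have r: "r = ln (exp u + (\<Sum>j\<in>J. exp (y j)))"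
  proof -
    have "s * (a2 * (w p \<bullet> x) + b2) - a = u"
      by (simp add: a_def u_def algebra_simps)
    then show ?thesis
      by (simp add: r_def neg_ln_softmax_eq J_def y_def a_def)
  qed
  have "(\<Sum>j\<in>J. w j \<bullet> x) = W \<bullet> x - w p \<bullet> x"
    using p by (simp add: J_def W_def sum_diff1 inner_sum_left)
  moreover have v: "v = (s * (W \<bullet> x - w p \<bullet> x) - m * a) / m"
    using m by (simp add: v_def a_def inner_diff_left inner_add_left field_simps)
  ultimately have mean: "(\<Sum>j\<in>J. y j) / card J = v"
    using J by (simp add: y_def sum_subtractf flip: sum_distrib_left)
  have jensen: "m * exp v \<le> (\<Sum>j\<in>J. exp (y j))"
    using sum_exp_ge_card_mul_exp_mean(1)[OF J(1,2), of y] unfolding mean by (simp add: J(3))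
  have pos: "0 < exp u + m * exp v" "0 < exp u + (\<Sum>j\<in>J. exp (y j))"
    using m by (auto intro!: add_pos_pos add_pos_nonneg sum_nonneg)
  show "log_sum_exp m u v \<le> r"
    unfolding r log_sum_exp_def using jensen pos by simp
  assume "s \<noteq> 0" "r = log_sum_exp m u v"
  then have "m * exp v = (\<Sum>j\<in>J. exp (y j))"
    unfolding r log_sum_exp_def using pos by simp
  then have "\<forall>j\<in>J. y j = v"
    using sum_exp_ge_card_mul_exp_mean(2)[OF J(1,2), of y] unfolding mean by (simp add: J(3))
  show "\<forall>j\<in>{1..k} - {p}. w j \<bullet> x = (W \<bullet> x - w p \<bullet> x) / m"
  proof
    fix j assume "j \<in> {1..k} - {p}"
    then have "s * (w j \<bullet> x) = s * ((W \<bullet> x - w p \<bullet> x) / m)"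
      using \<open>\<forall>j\<in>J. y j = v\<close> m by (simp add: J_def y_def v field_simps)
    then show "w j \<bullet> x = (W \<bullet> x - w p \<bullet> x) / m"
      by (rule mult_left_cancel[OF \<open>s \<noteq> 0\<close>, THEN iffD1])
  qed
qed

lemma gm_softmax_loss_ge_log_sum_exp_means:
  fixes w z :: "nat \<Rightarrow> 'a::real_inner" and s a1 a2 b1 b2 :: real
  assumes labels: "\<forall>i<N. y i \<in> {1..k}" and k: "2 \<le> k" and N: "N > 0"
  defines "m \<equiv> real k - 1" and "W \<equiv> \<Sum>c\<in>{1..k}. w c"
  defines "u \<equiv> \<lambda>i. s * ((a2 - a1) * (w (y i) \<bullet> z i) + b2 - b1)"
    and "v \<equiv> \<lambda>i. s * ((W - (1 + m * a1) *\<^sub>R w (y i)) \<bullet> z i / m - b1)"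
  shows "log_sum_exp m ((\<Sum>i<N. u i) / N) ((\<Sum>i<N. v i) / N) \<le> gm_softmax_loss s a1 a2 b1 b2 k N y w z"
    and "s \<noteq> 0 \<Longrightarrow>
         gm_softmax_loss s a1 a2 b1 b2 k N y w z = log_sum_exp m ((\<Sum>i<N. u i) / N) ((\<Sum>i<N. v i) / N) \<Longrightarrow>
         \<forall>i<N. \<forall>j\<in>{1..k} - {y i}. w j \<bullet> z i = (W \<bullet> z i - w (y i) \<bullet> z i) / m"
proof -
  define r where "r i = - ln (exp (s * (a1 * (w (y i) \<bullet> z i) + b1)) /
      (exp (s * (a2 * (w (y i) \<bullet> z i) + b2)) + (\<Sum>j\<in>{1..k} - {y i}. exp (s * (w j \<bullet> z i)))))" for i
  have m: "m > 0"
    using k by (simp add: m_def)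
  have loss: "gm_softmax_loss s a1 a2 b1 b2 k N y w z = (\<Sum>i<N. r i) / N"
    by (simp add: gm_softmax_loss_def r_def)
  have r_ge: "log_sum_exp m (u i) (v i) \<le> r i" if "i < N" for i
    using gm_softmax_summand_ge(1)[OF k labels[rule_format, OF that]]
    by (simp add: r_def u_def v_def m_def W_def)
  have jensen: "log_sum_exp m ((\<Sum>i<N. u i) / N) ((\<Sum>i<N. v i) / N)
      \<le> (\<Sum>i<N. log_sum_exp m (u i) (v i)) / N"
    using log_sum_exp_mean_le[of m "{..<N}" u v] m N by (simp add: lessThan_empty_iff)
  also have mono: "\<dots> \<le> (\<Sum>i<N. r i) / N"
    using r_ge N by (intro divide_right_mono sum_mono) auto
  finally show "log_sum_exp m ((\<Sum>i<N. u i) / N) ((\<Sum>i<N. v i) / N) \<le> gm_softmax_loss s a1 a2 b1 b2 k N y w z"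
    unfolding loss .
  assume "s \<noteq> 0" and "gm_softmax_loss s a1 a2 b1 b2 k N y w z
      = log_sum_exp m ((\<Sum>i<N. u i) / N) ((\<Sum>i<N. v i) / N)"
  with jensen mono have "(\<Sum>i<N. log_sum_exp m (u i) (v i)) / N = (\<Sum>i<N. r i) / N"
    unfolding loss by linarith
  then have "(\<Sum>i<N. r i - log_sum_exp m (u i) (v i)) = 0"
    using N by (simp add: sum_subtractf)
  then have eq: "\<forall>i<N. r i = log_sum_exp m (u i) (v i)"
    using r_ge by (subst (asm) sum_nonneg_eq_0_iff) auto
  show "\<forall>i<N. \<forall>j\<in>{1..k} - {y i}. w j \<bullet> z i = (W \<bullet> z i - w (y i) \<bullet> z i) / m"
  proof (intro allI impI)
    fix i assume "i < N"
    with eq have "r i = log_sum_exp m (u i) (v i)"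
      by blast
    from gm_softmax_summand_ge(2)[OF k labels[rule_format, OF \<open>i < N\<close>] \<open>s \<noteq> 0\<close>
        this[unfolded r_def u_def v_def m_def W_def]]
    show "\<forall>j\<in>{1..k} - {y i}. w j \<bullet> z i = (W \<bullet> z i - w (y i) \<bullet> z i) / m"
      unfolding m_def W_def .
  qed
qed

lemma regular_simplex_of_inner_samples:
  fixes w :: "nat \<Rightarrow> 'a::real_inner"
  assumes bal: "balanced_labels k N y" and "N div k \<ge> 1"
    and w: "\<forall>c\<in>{1..k}. norm (w c) = 1"
    and samples: "\<forall>i<N. \<forall>j\<in>{1..k} - {y i}. w j \<bullet> w (y i) = - 1 / (real k - 1)"
  shows "regular_simplex k w"
  unfolding regular_simplex_def
proof (intro conjI ballI impI)
  show "norm (w c) = 1" if "c \<in> {1..k}" for c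
    using w that by blast
next
  fix p q assume p: "p \<in> {1..k}" and q: "q \<in> {1..k}" and "p \<noteq> q"
  obtain i where "i < N" "y i = p"
    using balanced_labels_obtain_sample[OF bal assms(2) p] .
  then show "w p \<bullet> w q = - 1 / (real k - 1)"
    using samples q \<open>p \<noteq> q\<close> by (auto simp: inner_commute)
qed

lemma mean_target_logit_ge:
  fixes w z :: "nat \<Rightarrow> 'a::real_inner" and s a1 a2 b1 b2 :: real
  assumes labels: "\<forall>i<N. y i \<in> {1..k}" and N: "N > 0" and s: "s > 0" and a2: "a2 \<le> a1"
    and unit: "unit_config k N w z"
  shows "s * (a2 - a1 + b2 - b1) \<le> (\<Sum>i<N. s * ((a2 - a1) * (w (y i) \<bullet> z i) + b2 - b1)) / N"
proof -
  have "s * (a2 - a1 + b2 - b1) \<le> s * ((a2 - a1) * (w (y i) \<bullet> z i) + b2 - b1)" if "i < N" for i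
  proof -
    have "w (y i) \<bullet> z i \<le> 1"
      using norm_cauchy_schwarz[of "w (y i)" "z i"] unit labels that by (simp add: unit_config_def)
    then have "a2 - a1 \<le> (a2 - a1) * (w (y i) \<bullet> z i)"
      using mult_left_mono_neg[of "w (y i) \<bullet> z i" 1 "a2 - a1"] a2 by simp
    then have "a2 - a1 + b2 - b1 \<le> (a2 - a1) * (w (y i) \<bullet> z i) + b2 - b1"
      by linarith
    then show ?thesis
      using s by (simp add: mult_left_mono)
  qed
  then have "(\<Sum>i<N. s * (a2 - a1 + b2 - b1)) \<le> (\<Sum>i<N. s * ((a2 - a1) * (w (y i) \<bullet> z i) + b2 - b1))"
    by (intro sum_mono) auto
  then show ?thesis
    using N by (simp add: field_simps)
qed

lemma mean_negative_logit_ge: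
  fixes w z :: "nat \<Rightarrow> 'a::real_inner" and s a1 b1 :: real
  assumes bal: "balanced_labels k N y" and "k dvd N" "N div k \<ge> 1" and k: "2 \<le> k"
    and s: "s > 0" and a1: "a1 \<ge> 1/2" and unit: "unit_config k N w z"
  defines "m \<equiv> real k - 1" and "W \<equiv> \<Sum>c\<in>{1..k}. w c"
  defines "v \<equiv> \<lambda>i. s * ((W - (1 + m * a1) *\<^sub>R w (y i)) \<bullet> z i / m - b1)"
  shows "- s * (1 / m + a1 + b1) \<le> (\<Sum>i<N. v i) / N"
    and "(\<Sum>i<N. v i) / N = - s * (1 / m + a1 + b1) \<Longrightarrow> W = 0 \<and> (\<forall>i<N. z i = w (y i))"
proof -
  define t where "t = 1 + m * a1"
  define G where "G = (\<Sum>i<N. (W - t *\<^sub>R w (y i)) \<bullet> z i)"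
  have m: "m \<ge> 1"
    using k by (simp add: m_def)
  have N: "N > 0"
    using assms(3) by (cases N) auto
  \<comment> \<open>This is where \<open>a1 \<ge> 1/2\<close> enters.\<close>
  have "m * (1/2) \<le> m * a1"
    using a1 m by (intro mult_left_mono) auto
  moreover have "real k = m + 1"
    by (simp add: m_def)
  ultimately have "2 * t > k"
    using t_def by linarith
  moreover have w: "\<forall>c\<in>{1..k}. norm (w c) = 1" and z: "\<forall>i<N. norm (z i) = 1"
    using unit by (simp_all add: unit_config_def)
  moreover have "k > 0"
    using k by simp
  ultimately have G: "- real N * t \<le> G" and G_eq: "G = - real N * t \<Longrightarrow> W = 0 \<and> (\<forall>i<N. z i = w (y i))"
    unfolding G_def W_def using sum_inner_balanced_ge[OF bal assms(2) _ N] by blast+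
  have v: "(\<Sum>i<N. v i) / N = - s * (1 / m + a1 + b1) + s * (G + N * t) / (N * m)"
    using N m by (simp add: v_def G_def t_def sum_subtractf field_simps flip: sum_distrib_left sum_divide_distrib)
  show "- s * (1 / m + a1 + b1) \<le> (\<Sum>i<N. v i) / N"
    using G s N m unfolding v by simp
  assume "(\<Sum>i<N. v i) / N = - s * (1 / m + a1 + b1)"
  then have "G = - real N * t"
    using s N m unfolding v by simp
  then show "W = 0 \<and> (\<forall>i<N. z i = w (y i))"
    by (rule G_eq)
qed

lemma gm_softmax_loss_lower_bound:
  fixes w z :: "nat \<Rightarrow> 'a::real_inner" and s a1 a2 b1 b2 :: real
  assumes bal: "balanced_labels k N y" and "k dvd N" "N div k \<ge> 1" and k: "2 \<le> k"
    and s: "s > 0" and a1: "a1 \<ge> 1/2" and a2: "a2 \<le> a1" and unit: "unit_config k N w z"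
  defines "L \<equiv> gm_softmax_loss s a1 a2 b1 b2 k N y w z"
    and "bound \<equiv> log_sum_exp (real k - 1) (s * (a2 - a1 + b2 - b1)) (- s * (1 / (real k - 1) + a1 + b1))"
  shows "bound \<le> L"
    and "L = bound \<Longrightarrow> regular_simplex k w \<and> (\<forall>i<N. z i = w (y i))"
proof -
  define m where "m = real k - 1"
  define W where "W = (\<Sum>c\<in>{1..k}. w c)"
  define u where "u = (\<lambda>i. s * ((a2 - a1) * (w (y i) \<bullet> z i) + b2 - b1))"
  define v where "v = (\<lambda>i. s * ((W - (1 + m * a1) *\<^sub>R w (y i)) \<bullet> z i / m - b1))"
  have m: "m > 0"
    using k by (simp add: m_def)
  have N: "N > 0"
    using assms(3) by (cases N) auto
  have labels: "\<forall>i<N. y i \<in> {1..k}" and w: "\<forall>c\<in>{1..k}. norm (w c) = 1"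
    using bal unit by (simp_all add: balanced_labels_def unit_config_def)
  have s0: "s \<noteq> 0"
    using s by simp
  have means: "log_sum_exp m ((\<Sum>i<N. u i) / N) ((\<Sum>i<N. v i) / N) \<le> L"
    unfolding L_def m_def W_def u_def v_def by (rule gm_softmax_loss_ge_log_sum_exp_means[OF labels k N])
  have means_eq: "L = log_sum_exp m ((\<Sum>i<N. u i) / N) ((\<Sum>i<N. v i) / N) \<Longrightarrow>
       \<forall>i<N. \<forall>j\<in>{1..k} - {y i}. w j \<bullet> z i = (W \<bullet> z i - w (y i) \<bullet> z i) / m"
    unfolding L_def m_def W_def u_def v_def by (rule gm_softmax_loss_ge_log_sum_exp_means(2)[OF labels k N s0])
  have negative: "- s * (1 / m + a1 + b1) \<le> (\<Sum>i<N. v i) / N"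
    unfolding m_def W_def v_def by (rule mean_negative_logit_ge(1)[OF bal assms(2,3) k s a1 unit])
  have negative_eq: "(\<Sum>i<N. v i) / N = - s * (1 / m + a1 + b1) \<Longrightarrow> W = 0 \<and> (\<forall>i<N. z i = w (y i))"
    unfolding m_def W_def v_def by (rule mean_negative_logit_ge(2)[OF bal assms(2,3) k s a1 unit])
  have u_ge: "s * (a2 - a1 + b2 - b1) \<le> (\<Sum>i<N. u i) / N"
    unfolding u_def by (rule mean_target_logit_ge[OF labels N s a2 unit])
  have lower: "bound \<le> log_sum_exp m (s * (a2 - a1 + b2 - b1)) ((\<Sum>i<N. v i) / N)"
    unfolding bound_def m_def[symmetric] using negative m by (intro log_sum_exp_mono) auto
  also have "\<dots> \<le> log_sum_exp m ((\<Sum>i<N. u i) / N) ((\<Sum>i<N. v i) / N)"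
    using u_ge m by (intro log_sum_exp_mono) auto
  also note means
  finally show "bound \<le> L" .
  assume "L = bound"
  have "(\<Sum>i<N. v i) / N = - s * (1 / m + a1 + b1)"
  proof (rule ccontr)
    assume "(\<Sum>i<N. v i) / N \<noteq> - s * (1 / m + a1 + b1)"
    then have "bound < log_sum_exp m (s * (a2 - a1 + b2 - b1)) ((\<Sum>i<N. v i) / N)"
      unfolding bound_def m_def[symmetric] using negative m
      by (intro log_sum_exp_strict_mono) auto
    also note \<open>\<dots> \<le> log_sum_exp m ((\<Sum>i<N. u i) / N) ((\<Sum>i<N. v i) / N)\<close>
    also note means
    finally show False
      using \<open>L = bound\<close> by simp
  qed
  then have W: "W = 0" and zw: "\<forall>i<N. z i = w (y i)"
    using negative_eq by auto
  have "L = log_sum_exp m ((\<Sum>i<N. u i) / N) ((\<Sum>i<N. v i) / N)"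
    using lower \<open>_ \<le> log_sum_exp m ((\<Sum>i<N. u i) / N) _\<close> means \<open>L = bound\<close> by linarith
  then have "\<forall>i<N. \<forall>j\<in>{1..k} - {y i}. w j \<bullet> z i = (W \<bullet> z i - w (y i) \<bullet> z i) / m"
    using means_eq by simp
  then have "\<forall>i<N. \<forall>j\<in>{1..k} - {y i}. w j \<bullet> w (y i) = - 1 / (real k - 1)"
    using W zw w labels by (simp add: m_def norm_eq_1)
  with zw show "regular_simplex k w \<and> (\<forall>i<N. z i = w (y i))"
    using regular_simplex_of_inner_samples[OF bal assms(3) w] by simp
qed

lemma gm_softmax_loss_regular_simplex:
  fixes w z :: "nat \<Rightarrow> 'a::real_inner" and s a1 a2 b1 b2 :: real
  assumes simplex: "regular_simplex k w" and k: "2 \<le> k" and N: "N > 0"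
    and labels: "\<forall>i<N. y i \<in> {1..k}" and zw: "\<forall>i<N. z i = w (y i)"
  shows "gm_softmax_loss s a1 a2 b1 b2 k N y w z
    = log_sum_exp (real k - 1) (s * (a2 - a1 + b2 - b1)) (- s * (1 / (real k - 1) + a1 + b1))"
proof -
  define m where "m = real k - 1"
  define bound where "bound = log_sum_exp m (s * (a2 - a1 + b2 - b1)) (- s * (1 / m + a1 + b1))"
  have summand: "- ln (exp (s * (a1 * (w (y i) \<bullet> z i) + b1)) /
      (exp (s * (a2 * (w (y i) \<bullet> z i) + b2)) + (\<Sum>j\<in>{1..k} - {y i}. exp (s * (w j \<bullet> z i)))))
      = bound" if i: "i < N" for i
  proof -
    define A where "A = s * (a1 * (w (y i) \<bullet> z i) + b1)"
    have c: "w (y i) \<bullet> z i = 1" and other: "\<forall>j\<in>{1..k} - {y i}. w j \<bullet> z i = - 1 / m"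
      using simplex labels zw i by (auto simp: regular_simplex_def norm_eq_1 m_def)
    have "s * (a2 * (w (y i) \<bullet> z i) + b2) - A = s * (a2 - a1 + b2 - b1)"
      using c by (simp add: A_def algebra_simps)
    moreover have "(\<Sum>j\<in>{1..k} - {y i}. exp (s * (w j \<bullet> z i) - A))
        = (\<Sum>j\<in>{1..k} - {y i}. exp (- s * (1 / m + a1 + b1)))"
      using c other by (intro sum.cong) (simp_all add: A_def algebra_simps)
    moreover have "real (card ({1..k} - {y i})) = m"
      using labels i k by (simp add: m_def of_nat_diff)
    ultimately show ?thesis
      unfolding A_def[symmetric] neg_ln_softmax_eq by (simp add: bound_def log_sum_exp_def)
  qed
  have "gm_softmax_loss s a1 a2 b1 b2 k N y w z = (\<Sum>i<N. bound) / N"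
    unfolding gm_softmax_loss_def using summand by simp
  then show ?thesis
    using N by (simp add: bound_def m_def)
qed

lemma gm_softmax_loss_eq_bound_iff:
  fixes w z :: "nat \<Rightarrow> 'a::real_inner" and s a1 a2 b1 b2 :: real
  assumes bal: "balanced_labels k N y" and "k dvd N" "N div k \<ge> 1" and k: "2 \<le> k"
    and s: "s > 0" and a1: "a1 \<ge> 1/2" and a2: "a2 \<le> a1" and unit: "unit_config k N w z"
  shows "gm_softmax_loss s a1 a2 b1 b2 k N y w z
      = log_sum_exp (real k - 1) (s * (a2 - a1 + b2 - b1)) (- s * (1 / (real k - 1) + a1 + b1))
    \<longleftrightarrow> regular_simplex k w \<and> (\<forall>i<N. z i = w (y i))"
proof -
  have "N > 0"
    using assms(3) by (cases N) auto
  then show ?thesis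
    using gm_softmax_loss_lower_bound(2)[OF assms] gm_softmax_loss_regular_simplex[OF _ k]
      bal by (auto simp: balanced_labels_def)
qed

lemma gm_softmax_loss_minimizer:
  fixes w z :: "nat \<Rightarrow> 'a::euclidean_space" and s a1 a2 b1 b2 :: real
  assumes bal: "balanced_labels k N y" and "k dvd N" "N div k \<ge> 1"
    and k: "2 \<le> k" "k \<le> DIM('a) + 1"
    and s: "s > 0" and a1: "a1 \<ge> 1/2" and a2: "a2 \<le> a1" and unit: "unit_config k N w z"
    and minimal: "\<forall>(w' :: nat \<Rightarrow> 'a) z'. unit_config k N w' z' \<longrightarrow>
      gm_softmax_loss s a1 a2 b1 b2 k N y w z \<le> gm_softmax_loss s a1 a2 b1 b2 k N y w' z'"
  shows "regular_simplex k w \<and> (\<forall>i<N. z i = w (y i))"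
proof -
  obtain w0 :: "nat \<Rightarrow> 'a" where w0: "regular_simplex k w0"
    using regular_simplex_exists[OF k] by blast
  have u0: "unit_config k N w0 (w0 \<circ> y)"
    using w0 bal by (auto simp: unit_config_def regular_simplex_def balanced_labels_def)
  have "gm_softmax_loss s a1 a2 b1 b2 k N y w z \<le> gm_softmax_loss s a1 a2 b1 b2 k N y w0 (w0 \<circ> y)"
    using minimal u0 by blast
  also have "\<dots> = log_sum_exp (real k - 1) (s * (a2 - a1 + b2 - b1)) (- s * (1 / (real k - 1) + a1 + b1))"
    using gm_softmax_loss_eq_bound_iff[OF assms(1-3) k(1) s a1 a2 u0] w0 by simp
  finally have "gm_softmax_loss s a1 a2 b1 b2 k N y w z
      \<le> log_sum_exp (real k - 1) (s * (a2 - a1 + b2 - b1)) (- s * (1 / (real k - 1) + a1 + b1))" .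
  moreover have "log_sum_exp (real k - 1) (s * (a2 - a1 + b2 - b1)) (- s * (1 / (real k - 1) + a1 + b1))
      \<le> gm_softmax_loss s a1 a2 b1 b2 k N y w z"
    by (rule gm_softmax_loss_lower_bound(1)[OF assms(1-3) k(1) s a1 a2 unit])
  ultimately have "gm_softmax_loss s a1 a2 b1 b2 k N y w z
      = log_sum_exp (real k - 1) (s * (a2 - a1 + b2 - b1)) (- s * (1 / (real k - 1) + a1 + b1))"
    by (rule antisym)
  then show ?thesis
    using gm_softmax_loss_eq_bound_iff[OF assms(1-3) k(1) s a1 a2 unit] by blast
qed

theorem theorem3:
  fixes s a1 a2 b1 b2 :: real and k N :: nat and y :: "nat \<Rightarrow> nat"
  assumes dim: "DIM('a::euclidean_space) \<ge> 2"
    and k2: "2 \<le> k" and kd: "k \<le> DIM('a) + 1"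
    and labels: "\<forall>i<N. y i \<in> {1..k}"
    and balanced: "k dvd N" "N div k \<ge> 1"
      "\<forall>c\<in>{1..k}. card {i. i < N \<and> y i = c} = N div k"
    and s: "s > 0" and a1: "a1 \<ge> 1/2" and a2: "a2 \<le> a1"
  shows
    "(\<forall>(w::nat \<Rightarrow> 'a) z. unit_config k N w z \<longrightarrow>
        gm_softmax_loss s a1 a2 b1 b2 k N y w z
          \<ge> ln (exp (s * (a2 - a1 + b2 - b1))
                 + (real k - 1) * exp (- s * (1 / (real k - 1) + a1 + b1)))
        \<and> (gm_softmax_loss s a1 a2 b1 b2 k N y w z
              = ln (exp (s * (a2 - a1 + b2 - b1))
                 + (real k - 1) * exp (- s * (1 / (real k - 1) + a1 + b1)))
           \<longleftrightarrow> (\<forall>i\<in>{1..k}. \<forall>j\<in>{1..k}. i \<noteq> j \<longrightarrow> w i \<bullet> w j = - 1 / (real k - 1))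
               \<and> (\<forall>i<N. z i = w (y i))))
     \<and> (\<forall>(w::nat \<Rightarrow> 'a) z. unit_config k N w z \<longrightarrow>
          class_margin k w \<le> arccos (- 1 / (real k - 1))
          \<and> min_sample_margin k N y w z \<le> real k / (real k - 1))
     \<and> (\<forall>(w::nat \<Rightarrow> 'a) z. unit_config k N w z \<and>
          (\<forall>(w'::nat \<Rightarrow> 'a) z'. unit_config k N w' z' \<longrightarrow>
             gm_softmax_loss s a1 a2 b1 b2 k N y w z \<le> gm_softmax_loss s a1 a2 b1 b2 k N y w' z')
          \<longrightarrow> class_margin k w = arccos (- 1 / (real k - 1))
              \<and> min_sample_margin k N y w z = real k / (real k - 1))"
proof -
  have bal: "balanced_labels k N y" and N: "N > 0"
    using labels balanced by (auto simp: balanced_labels_def intro: Nat.gr0I)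
  note lower_bound = gm_softmax_loss_lower_bound(1)[OF bal balanced(1,2) k2 s a1 a2]
    and eq_bound_iff = gm_softmax_loss_eq_bound_iff[OF bal balanced(1,2) k2 s a1 a2]
    and minimizer = gm_softmax_loss_minimizer[OF bal balanced(1,2) k2 kd s a1 a2]
  show ?thesis
    unfolding log_sum_exp_def[symmetric]
  proof (intro conjI allI impI)
    fix w z :: "nat \<Rightarrow> 'a"
    assume unit: "unit_config k N w z"
    then have simplex_iff: "regular_simplex k w \<longleftrightarrow>
        (\<forall>i\<in>{1..k}. \<forall>j\<in>{1..k}. i \<noteq> j \<longrightarrow> w i \<bullet> w j = - 1 / (real k - 1))"
      by (simp add: regular_simplex_def unit_config_def)
    show "log_sum_exp (real k - 1) (s * (a2 - a1 + b2 - b1)) (- s * (1 / (real k - 1) + a1 + b1))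
        \<le> gm_softmax_loss s a1 a2 b1 b2 k N y w z"
      by (rule lower_bound[OF unit])
    show "gm_softmax_loss s a1 a2 b1 b2 k N y w z
        = log_sum_exp (real k - 1) (s * (a2 - a1 + b2 - b1)) (- s * (1 / (real k - 1) + a1 + b1))
      \<longleftrightarrow> (\<forall>i\<in>{1..k}. \<forall>j\<in>{1..k}. i \<noteq> j \<longrightarrow> w i \<bullet> w j = - 1 / (real k - 1))
        \<and> (\<forall>i<N. z i = w (y i))"
      using eq_bound_iff[OF unit] simplex_iff by simp
    show "class_margin k w \<le> arccos (- 1 / (real k - 1))"
      using unit by (intro class_margin_le[OF k2]) (simp add: unit_config_def)
    show "min_sample_margin k N y w z \<le> real k / (real k - 1)"
      by (rule min_sample_margin_le[OF bal balanced(2) k2 unit])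
  next
    fix w z :: "nat \<Rightarrow> 'a"
    assume "unit_config k N w z \<and> (\<forall>(w'::nat \<Rightarrow> 'a) z'. unit_config k N w' z' \<longrightarrow>
      gm_softmax_loss s a1 a2 b1 b2 k N y w z \<le> gm_softmax_loss s a1 a2 b1 b2 k N y w' z')"
    then have "regular_simplex k w" "\<forall>i<N. z i = w (y i)"
      using minimizer by blast+
    then show "class_margin k w = arccos (- 1 / (real k - 1))"
      "min_sample_margin k N y w z = real k / (real k - 1)"
      using class_margin_regular_simplex[OF _ k2] min_sample_margin_regular_simplex[OF _ k2 N labels]
      by simp_all
  qed
qed

end
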